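(* Let $f:\mathbb{R}^n\to\mathbb{R}$ be a continuous, $L$-smooth loss function with global minimum $w^*$, and let $E(w):=f(w)-f(w^* )$. Let $w_i$ and $w_{i+1}$ be two subsequent points of a sequence generated by the Loss-Guarded L2O algorithm using deterministic gradient descent with step size $\alpha/L$ (for some $\alpha>0$) as the guarding mechanism. Then $$E(w_{i+1})-E(w_i)\le -\frac{\alpha}{L}\Big(1-\frac{\alpha}{2}\Big)\|\nabla f(w_i)\|_2^2$$ and $$E(w_i)\ge \frac{\alpha}{L}\Big(1-\frac{\alpha}{2}\Big)\|\nabla f(w_i)\|_2^2.$$
   Context: Loss-Guarded L2O algorithm with deterministic gradient descent: at each step $i$, an arbitrary black-box rule proposes a point $y_i$, the fallback proposes $z_i=w_i-\frac{\alpha}{L}\nabla f(w_i)$, and $w_{i+1}=y_i$ if $f(y_i)<f(z_i)$, otherwise $w_{i+1}=z_i$. $f$ is $L$-smooth means $f(y)\le f(x)+\langle\nabla f(x),y-x\rangle+\frac{L}{2}\|y-x\|_2^2$ for all $x,y$. *)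

theory Defs
  imports "HOL-Analysis.Analysis"
begin

definition is_gradient :: "(real^'n \<Rightarrow> real) \<Rightarrow> (real^'n \<Rightarrow> real^'n) \<Rightarrow> bool" where
  "is_gradient f grad \<longleftrightarrow> (\<forall>x. (f has_derivative (\<lambda>h. grad x \<bullet> h)) (at x))"

text \<open>L-smoothness in the sense of the paper (descent-lemma form).\<close>
definition L_smooth :: "real \<Rightarrow> (real^'n \<Rightarrow> real) \<Rightarrow> (real^'n \<Rightarrow> real^'n) \<Rightarrow> bool" where
  "L_smooth L f grad \<longleftrightarrow>
     (\<forall>x y. f y \<le> f x + grad x \<bullet> (y - x) + L / 2 * (norm (y - x))\<^sup>2)"

definition lg_l2o_step :: "(real^'n \<Rightarrow> real) \<Rightarrow> (real^'n \<Rightarrow> real^'n) \<Rightarrow> real \<Rightarrow> real \<Rightarrow> real^'n \<Rightarrow> real^'n \<Rightarrow> real^'n" where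
  "lg_l2o_step f grad \<alpha> L w y =
     (let z = w - (\<alpha> / L) *\<^sub>R grad w in if f y < f z then y else z)"

end

theory Submission
  imports Defs
begin

text \<open>A gradient step of length \<open>\<alpha>/L\<close> decreases an \<open>L\<close>-smooth loss by at least
  \<open>(\<alpha>/L)(1 - \<alpha>/2) \<parallel>\<nabla>f(w)\<parallel>\<^sup>2\<close> (descent lemma), and the loss guard only ever accepts a point
  that is no worse than this fallback. Since \<open>f(w\<^sup>*)\<close> lies below every loss value, the same
  bound also controls the suboptimality \<open>E(w\<^sub>i)\<close>.\<close>

lemma L_smooth_gradient_step:
  assumes "L_smooth L f grad"
  shows "f (w - t *\<^sub>R grad w) \<le> f w - t * (1 - L * t / 2) * (norm (grad w))\<^sup>2"
proof -
  have "f (w - t *\<^sub>R grad w)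
          \<le> f w + grad w \<bullet> ((w - t *\<^sub>R grad w) - w)
              + L / 2 * (norm ((w - t *\<^sub>R grad w) - w))\<^sup>2"
    using assms unfolding L_smooth_def by blast
  also have "\<dots> = f w - t * (1 - L * t / 2) * (norm (grad w))\<^sup>2"
    by (simp add: dot_square_norm power_mult_distrib power2_eq_square algebra_simps)
  finally show ?thesis .
qed

lemma L_smooth_scaled_gradient_step:
  assumes "L_smooth L f grad" and "L > 0"
  shows "f (w - (\<alpha> / L) *\<^sub>R grad w) \<le> f w - (\<alpha> / L) * (1 - \<alpha> / 2) * (norm (grad w))\<^sup>2"
  using L_smooth_gradient_step[OF assms(1), of w "\<alpha> / L"] assms(2) by simp

lemma lg_l2o_step_le_fallback:
  "f (lg_l2o_step f grad \<alpha> L w y) \<le> f (w - (\<alpha> / L) *\<^sub>R grad w)"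
  unfolding lg_l2o_step_def Let_def by simp

lemma lg_l2o_step_descent:
  assumes "L_smooth L f grad" and "L > 0"
  shows "f (lg_l2o_step f grad \<alpha> L w y) \<le> f w - (\<alpha> / L) * (1 - \<alpha> / 2) * (norm (grad w))\<^sup>2"
  using lg_l2o_step_le_fallback L_smooth_scaled_gradient_step[OF assms] order_trans by blast

theorem proposition1:
  fixes f :: "real^'n \<Rightarrow> real" and grad :: "real^'n \<Rightarrow> real^'n"
    and L \<alpha> :: real and wstar :: "real^'n"
    and w y :: "nat \<Rightarrow> real^'n" and i :: nat
  assumes "continuous_on UNIV f"
    and "is_gradient f grad"
    and "L > 0"
    and "L_smooth L f grad"
    and "\<forall>v. f wstar \<le> f v"
    and "\<alpha> > 0"
    and "\<forall>k. w (Suc k) = lg_l2o_step f grad \<alpha> L (w k) (y k)"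
  shows "(f (w (Suc i)) - f wstar) - (f (w i) - f wstar)
           \<le> - (\<alpha> / L) * (1 - \<alpha> / 2) * (norm (grad (w i)))\<^sup>2
         \<and> f (w i) - f wstar \<ge> (\<alpha> / L) * (1 - \<alpha> / 2) * (norm (grad (w i)))\<^sup>2"
proof -
  have descent: "f (w (Suc i)) \<le> f (w i) - (\<alpha> / L) * (1 - \<alpha> / 2) * (norm (grad (w i)))\<^sup>2"
    using assms(7) lg_l2o_step_descent[OF assms(4,3)] by simp
  moreover have "f wstar \<le> f (w (Suc i))"
    using assms(5) by blast
  ultimately show ?thesis
    by linarith
qed

end
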